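(* Let $X$ be a topological space, let $Y$ be a Urysohn space, let $S$ be a dense subset of $X$ and let $f:S\to Y$ be a $\theta$-continuous map. Then the following are equivalent: (1) $f$ has a $\theta$-continuous extension to $X$; (2) both of the following hold: $(+)$ for every family $\{A_\beta\}$ of subsets of $Y$ with $\bigcap_\beta \mathrm{cl}_\theta A_\beta=\emptyset$ one has $\bigcap_\beta\overline{f^{-1}(A_\beta)}=\emptyset$ (closures in $X$); and $(++)$ for every open set $W$ of $Y$ there is an open set $V$ of $X$ with $X_\theta(f^{-1}(W))\subseteq V\subseteq X_\theta(f^{-1}(\overline W))$.
   Context: A Urysohn space is one in which any two distinct points have open neighborhoods with disjoint closures. A map $g:T\to Y$ is $\theta$-continuous if for every $t\in T$ and every open neighborhood $U$ of $g(t)$ there is a neighborhood $W$ of $t$ with $g(W)\subseteq\overline U$ (for $f:S\to Y$, $S$ carries the subspace topology). For $M\subseteq Y$, $\mathrm{cl}_\theta M$ is the set of $y\in Y$ with $\mathrm{cl}\,U\cap M\neq\emptyset$ for every open $U\ni y$. $\mathcal N(x)$ is the set of open neighborhoods of $x$ in $X$. For $V\subseteq Y$, $X_\theta(f^{-1}(V))$ is the set of points $x\in X$ with $\bigcap\{\mathrm{cl}_\theta f(P\cap S):P\in\mathcal N(x)\}\subseteq V$. *)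

theory Defs
  imports "HOL-Analysis.Analysis"
begin

definition urysohn_space :: "'b topology \<Rightarrow> bool" where
  "urysohn_space Y \<longleftrightarrow>
     (\<forall>x\<in>topspace Y. \<forall>y\<in>topspace Y. x \<noteq> y \<longrightarrow>
        (\<exists>U V. openin Y U \<and> openin Y V \<and> x \<in> U \<and> y \<in> V \<and>
               Y closure_of U \<inter> Y closure_of V = {}))"

definition theta_continuous_map :: "'a topology \<Rightarrow> 'b topology \<Rightarrow> ('a \<Rightarrow> 'b) \<Rightarrow> bool" where
  "theta_continuous_map T Y g \<longleftrightarrow>
     g ` topspace T \<subseteq> topspace Y \<and>
     (\<forall>t\<in>topspace T. \<forall>U. openin Y U \<and> g t \<in> U \<longrightarrow>
        (\<exists>W. openin T W \<and> t \<in> W \<and> g ` W \<subseteq> Y closure_of U))"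

definition theta_closure :: "'b topology \<Rightarrow> 'b set \<Rightarrow> 'b set" where
  "theta_closure Y M =
     {y \<in> topspace Y. \<forall>U. openin Y U \<and> y \<in> U \<longrightarrow> Y closure_of U \<inter> M \<noteq> {}}"

text \<open>X_theta(f^{-1}(V)) for f defined on S \<subseteq> X.\<close>
definition X_theta :: "'a topology \<Rightarrow> 'b topology \<Rightarrow> 'a set \<Rightarrow> ('a \<Rightarrow> 'b) \<Rightarrow> 'b set \<Rightarrow> 'a set" where
  "X_theta X Y S f V =
     {x \<in> topspace X.
        \<Inter>{theta_closure Y (f ` (P \<inter> S)) | P. openin X P \<and> x \<in> P} \<subseteq> V}"

end

theory Submission
  imports Defs
begin

text \<open>
  The extension, if it exists, is forced: in a Urysohn space the \<open>\<theta>\<close>-cluster set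
  \<open>I(x) = \<Inter>{cl\<^sub>\<theta> f(P \<inter> S) | P \<in> \<N>(x)}\<close> can contain at most the value of a
  \<open>\<theta>\<close>-continuous extension at \<open>x\<close>, and does contain it since \<open>S\<close> is dense. Conversely,
  condition (+), applied to the family of all \<open>A\<close> with \<open>x \<in> cl f\<^sup>-\<^sup>1(A)\<close>, makes every
  \<open>I(x)\<close> a singleton \<open>{g x}\<close>; then \<open>X\<^sub>\<theta>(f\<^sup>-\<^sup>1(V)) = g\<^sup>-\<^sup>1(V)\<close>, and condition (++) is
  exactly a reformulation of the \<open>\<theta>\<close>-continuity of \<open>g\<close>.
\<close>

definition theta_cluster_set :: "'a topology \<Rightarrow> 'b topology \<Rightarrow> 'a set \<Rightarrow> ('a \<Rightarrow> 'b) \<Rightarrow> 'a \<Rightarrow> 'b set"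
  where "theta_cluster_set X Y S f x = \<Inter>{theta_closure Y (f ` (P \<inter> S)) | P. openin X P \<and> x \<in> P}"

lemma in_theta_cluster_set:
  "y \<in> theta_cluster_set X Y S f x \<longleftrightarrow>
     (\<forall>P. openin X P \<and> x \<in> P \<longrightarrow> y \<in> theta_closure Y (f ` (P \<inter> S)))"
  unfolding theta_cluster_set_def by blast

lemma in_theta_closure:
  "y \<in> theta_closure Y M \<longleftrightarrow>
     y \<in> topspace Y \<and> (\<forall>U. openin Y U \<and> y \<in> U \<longrightarrow> Y closure_of U \<inter> M \<noteq> {})"
  unfolding theta_closure_def by blast

lemma theta_closure_subset_topspace: "theta_closure Y M \<subseteq> topspace Y"
  unfolding theta_closure_def by blast

lemma theta_closure_mono: "M \<subseteq> N \<Longrightarrow> theta_closure Y M \<subseteq> theta_closure Y N"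
  unfolding theta_closure_def by blast

lemma subset_theta_closure:
  assumes "M \<subseteq> topspace Y"
  shows "M \<subseteq> theta_closure Y M"
proof
  fix y assume y: "y \<in> M"
  have "y \<in> Y closure_of U" if "openin Y U" "y \<in> U" for U
    using that closure_of_subset[OF openin_subset] by blast
  then show "y \<in> theta_closure Y M"
    using y assms unfolding in_theta_closure by blast
qed

lemma X_theta_eq_theta_cluster_set:
  "X_theta X Y S f V = {x \<in> topspace X. theta_cluster_set X Y S f x \<subseteq> V}"
  unfolding X_theta_def theta_cluster_set_def by blast

lemma theta_cluster_set_subset_topspace:
  assumes "x \<in> topspace X"
  shows "theta_cluster_set X Y S f x \<subseteq> topspace Y"
proof
  fix y assume "y \<in> theta_cluster_set X Y S f x"
  then have "y \<in> theta_closure Y (f ` (topspace X \<inter> S))"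
    using assms unfolding in_theta_cluster_set by simp
  then show "y \<in> topspace Y" unfolding in_theta_closure by simp
qed

lemma in_theta_cluster_set_self:
  assumes "f ` S \<subseteq> topspace Y" and "s \<in> S"
  shows "f s \<in> theta_cluster_set X Y S f s"
  unfolding in_theta_cluster_set
proof (intro allI impI)
  fix P assume "openin X P \<and> s \<in> P"
  then have "f s \<in> f ` (P \<inter> S)" using assms(2) by blast
  moreover have "f ` (P \<inter> S) \<subseteq> topspace Y" using assms(1) by blast
  ultimately show "f s \<in> theta_closure Y (f ` (P \<inter> S))" using subset_theta_closure by blast
qed

lemma theta_cluster_set_singleton_imp_eq_on:
  assumes "S \<subseteq> topspace X" and fY: "f ` S \<subseteq> topspace Y"
    and cluster: "\<forall>x\<in>topspace X. theta_cluster_set X Y S f x = {g x}"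
  shows "\<forall>s\<in>S. g s = f s"
proof
  fix s assume s: "s \<in> S"
  then have "f s \<in> theta_cluster_set X Y S f s" by (rule in_theta_cluster_set_self[OF fY])
  moreover have "s \<in> topspace X" using s assms(1) by blast
  ultimately show "g s = f s" using cluster by simp
qed

lemma X_theta_eq_preimage:
  assumes "\<forall>x\<in>topspace X. theta_cluster_set X Y S f x = {g x}"
  shows "X_theta X Y S f V = {x \<in> topspace X. g x \<in> V}"
  unfolding X_theta_eq_theta_cluster_set using assms by auto

lemma in_closure_of_dense_Int:
  assumes "X closure_of S = topspace X" "openin X P" "x \<in> P"
  shows "x \<in> X closure_of (P \<inter> S)"
  using assms openin_Int_closure_of_subset[of X P S] openin_subset by blast

lemma theta_continuous_map_image_closure_of:
  assumes "theta_continuous_map X Y g"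
  shows "g ` (X closure_of T) \<subseteq> theta_closure Y (g ` T)"
proof
  fix y assume "y \<in> g ` (X closure_of T)"
  then obtain x where x: "x \<in> X closure_of T" and y: "y = g x" by blast
  have xX: "x \<in> topspace X" using x in_closure_of by fastforce
  show "y \<in> theta_closure Y (g ` T)"
    unfolding in_theta_closure
  proof (intro conjI allI impI)
    show "y \<in> topspace Y" using assms xX y unfolding theta_continuous_map_def by blast
    fix U assume "openin Y U \<and> y \<in> U"
    then obtain W where W: "openin X W" "x \<in> W" "g ` W \<subseteq> Y closure_of U"
      using assms xX y unfolding theta_continuous_map_def by blast
    then obtain t where "t \<in> T" "t \<in> W" using x unfolding in_closure_of by blast
    then show "Y closure_of U \<inter> g ` T \<noteq> {}" using W(3) by blast
  qed
qed

text \<open>Condition (++) for a map that is already defined on all of \<open>X\<close>.\<close>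

lemma theta_continuous_map_iff_open_between:
  assumes "g ` topspace X \<subseteq> topspace Y"
  shows "theta_continuous_map X Y g \<longleftrightarrow>
    (\<forall>W. openin Y W \<longrightarrow> (\<exists>V. openin X V \<and> {x \<in> topspace X. g x \<in> W} \<subseteq> V \<and>
                                V \<subseteq> {x \<in> topspace X. g x \<in> Y closure_of W}))"
    (is "_ \<longleftrightarrow> (\<forall>W. openin Y W \<longrightarrow> ?between W)")
proof
  assume g: "theta_continuous_map X Y g"
  show "\<forall>W. openin Y W \<longrightarrow> ?between W"
  proof (intro allI impI)
    fix W assume W: "openin Y W"
    define V where "V = \<Union>{P. openin X P \<and> g ` P \<subseteq> Y closure_of W}"
    have "openin X V" unfolding V_def by (rule openin_Union) blast
    moreover have "{x \<in> topspace X. g x \<in> W} \<subseteq> V"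
      using g W unfolding theta_continuous_map_def V_def by blast
    moreover have "V \<subseteq> {x \<in> topspace X. g x \<in> Y closure_of W}"
      unfolding V_def using openin_subset by fastforce
    ultimately show "?between W" by blast
  qed
next
  assume between: "\<forall>W. openin Y W \<longrightarrow> ?between W"
  show "theta_continuous_map X Y g"
    unfolding theta_continuous_map_def
  proof (intro conjI ballI allI impI assms)
    fix x U assume x: "x \<in> topspace X" and U: "openin Y U \<and> g x \<in> U"
    then obtain V where "openin X V" "{x \<in> topspace X. g x \<in> U} \<subseteq> V"
      "V \<subseteq> {x \<in> topspace X. g x \<in> Y closure_of U}"
      using between by auto
    then show "\<exists>W. openin X W \<and> x \<in> W \<and> g ` W \<subseteq> Y closure_of U"
      using x U by blast
  qed
qed

lemma open_between_X_theta_iff_theta_continuous_map: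
  assumes cluster: "\<forall>x\<in>topspace X. theta_cluster_set X Y S f x = {g x}"
  shows "(\<forall>W. openin Y W \<longrightarrow>
            (\<exists>V. openin X V \<and> X_theta X Y S f W \<subseteq> V \<and> V \<subseteq> X_theta X Y S f (Y closure_of W)))
         \<longleftrightarrow> theta_continuous_map X Y g"
proof -
  have "g ` topspace X \<subseteq> topspace Y"
    using cluster theta_cluster_set_subset_topspace[where X=X and Y=Y and S=S and f=f] by blast
  moreover have "X_theta X Y S f V = {x \<in> topspace X. g x \<in> V}" for V
    using cluster by (rule X_theta_eq_preimage)
  ultimately show ?thesis by (simp add: theta_continuous_map_iff_open_between)
qed

lemma theta_cluster_set_extension:
  assumes ury: "urysohn_space Y" and dense: "X closure_of S = topspace X"
    and g: "theta_continuous_map X Y g" and ext: "\<forall>s\<in>S. g s = f s"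
    and x: "x \<in> topspace X"
  shows "theta_cluster_set X Y S f x = {g x}"
proof -
  have "g x \<in> theta_cluster_set X Y S f x"
    unfolding in_theta_cluster_set
  proof (intro allI impI)
    fix P assume "openin X P \<and> x \<in> P"
    then have "g x \<in> g ` (X closure_of (P \<inter> S))"
      using in_closure_of_dense_Int[OF dense] by blast
    then have "g x \<in> theta_closure Y (g ` (P \<inter> S))"
      using theta_continuous_map_image_closure_of[OF g] by blast
    moreover have "g ` (P \<inter> S) = f ` (P \<inter> S)" using ext by auto
    ultimately show "g x \<in> theta_closure Y (f ` (P \<inter> S))" by simp
  qed
  moreover have "y = g x" if y: "y \<in> theta_cluster_set X Y S f x" for y
  proof (rule ccontr)
    assume "y \<noteq> g x"
    moreover have "y \<in> topspace Y"
      using y theta_cluster_set_subset_topspace[OF x, of Y S f] by blast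
    moreover have "g x \<in> topspace Y"
      using g x unfolding theta_continuous_map_def by blast
    ultimately obtain U U' where UU: "openin Y U" "openin Y U'" "g x \<in> U" "y \<in> U'"
      "Y closure_of U \<inter> Y closure_of U' = {}"
      using ury unfolding urysohn_space_def by metis
    obtain W where W: "openin X W" "x \<in> W" "g ` W \<subseteq> Y closure_of U"
      using g x UU(1,3) unfolding theta_continuous_map_def by blast
    have "y \<in> theta_closure Y (f ` (W \<inter> S))"
      using y W(1,2) unfolding in_theta_cluster_set by blast
    then have "Y closure_of U' \<inter> f ` (W \<inter> S) \<noteq> {}"
      using UU(2,4) unfolding in_theta_closure by blast
    then obtain s where s: "s \<in> W" "s \<in> S" "f s \<in> Y closure_of U'" by blast
    then have "f s \<in> Y closure_of U" using W(3) ext by force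
    then show False using s(3) UU(5) by blast
  qed
  ultimately show ?thesis by blast
qed

lemma theta_cluster_set_singleton:
  assumes ury: "urysohn_space Y" and dense: "X closure_of S = topspace X"
    and fY: "f ` S \<subseteq> topspace Y"
    and plus: "\<forall>\<A>. (\<forall>A\<in>\<A>. A \<subseteq> topspace Y) \<longrightarrow>
               topspace Y \<inter> \<Inter>{theta_closure Y A | A. A \<in> \<A>} = {} \<longrightarrow>
               topspace X \<inter> \<Inter>{X closure_of {s \<in> S. f s \<in> A} | A. A \<in> \<A>} = {}"
    and x: "x \<in> topspace X"
  shows "\<exists>z. theta_cluster_set X Y S f x = {z}"
proof -
  define \<A> where "\<A> = {A. A \<subseteq> topspace Y \<and> x \<in> X closure_of {s \<in> S. f s \<in> A}}"
  have \<A>_sub: "\<forall>A\<in>\<A>. A \<subseteq> topspace Y" unfolding \<A>_def by blast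
  have "x \<in> topspace X \<inter> \<Inter>{X closure_of {s \<in> S. f s \<in> A} | A. A \<in> \<A>}"
    using x unfolding \<A>_def by blast
  then have "topspace X \<inter> \<Inter>{X closure_of {s \<in> S. f s \<in> A} | A. A \<in> \<A>} \<noteq> {}"
    by blast
  then have "topspace Y \<inter> \<Inter>{theta_closure Y A | A. A \<in> \<A>} \<noteq> {}"
    using plus \<A>_sub by (auto simp only:)
  then obtain z where zY: "z \<in> topspace Y" and z: "\<And>A. A \<in> \<A> \<Longrightarrow> z \<in> theta_closure Y A"
    by blast
  have "z \<in> theta_cluster_set X Y S f x"
    unfolding in_theta_cluster_set
  proof (intro allI impI)
    fix P assume "openin X P \<and> x \<in> P"
    then have "x \<in> X closure_of (P \<inter> S)" using in_closure_of_dense_Int[OF dense] by blast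
    moreover have "P \<inter> S \<subseteq> {s \<in> S. f s \<in> f ` (P \<inter> S)}" by blast
    ultimately have "x \<in> X closure_of {s \<in> S. f s \<in> f ` (P \<inter> S)}"
      using closure_of_mono by blast
    then have "f ` (P \<inter> S) \<in> \<A>" unfolding \<A>_def using fY by blast
    then show "z \<in> theta_closure Y (f ` (P \<inter> S))" by (rule z)
  qed
  moreover have "y = z" if y: "y \<in> theta_cluster_set X Y S f x" for y
  proof (rule ccontr)
    assume "y \<noteq> z"
    moreover have "y \<in> topspace Y" using y theta_cluster_set_subset_topspace[OF x, of Y S f] by blast
    ultimately obtain U U' where UU: "openin Y U" "openin Y U'" "z \<in> U" "y \<in> U'"
      "Y closure_of U \<inter> Y closure_of U' = {}"
      using ury zY unfolding urysohn_space_def by metis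
    have "x \<in> X closure_of {s \<in> S. f s \<in> Y closure_of U'}"
      unfolding in_closure_of[of x]
    proof (intro conjI x allI impI)
      fix T assume "x \<in> T \<and> openin X T"
      then have "y \<in> theta_closure Y (f ` (T \<inter> S))"
        using y unfolding in_theta_cluster_set by blast
      then have "Y closure_of U' \<inter> f ` (T \<inter> S) \<noteq> {}"
        using UU(2,4) unfolding in_theta_closure by blast
      then show "\<exists>s. s \<in> {s \<in> S. f s \<in> Y closure_of U'} \<and> s \<in> T" by blast
    qed
    then have "Y closure_of U' \<in> \<A>" unfolding \<A>_def by (simp add: closure_of_subset_topspace)
    then have "z \<in> theta_closure Y (Y closure_of U')" by (rule z)
    then show False using UU(1,3,5) unfolding in_theta_closure by blast
  qed
  ultimately show ?thesis by blast
qed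

lemma theta_continuous_extension_imp_closure_condition:
  assumes g: "theta_continuous_map X Y g" and ext: "\<forall>s\<in>S. g s = f s"
    and empty: "topspace Y \<inter> \<Inter>{theta_closure Y A | A. A \<in> \<A>} = {}"
  shows "topspace X \<inter> \<Inter>{X closure_of {s \<in> S. f s \<in> A} | A. A \<in> \<A>} = {}"
proof (rule ccontr)
  assume "topspace X \<inter> \<Inter>{X closure_of {s \<in> S. f s \<in> A} | A. A \<in> \<A>} \<noteq> {}"
  then obtain x where x: "x \<in> topspace X"
    and cl: "\<And>A. A \<in> \<A> \<Longrightarrow> x \<in> X closure_of {s \<in> S. f s \<in> A}"
    by blast
  have "g x \<in> theta_closure Y A" if "A \<in> \<A>" for A
  proof -
    have "g x \<in> theta_closure Y (g ` {s \<in> S. f s \<in> A})"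
      using cl[OF that] theta_continuous_map_image_closure_of[OF g] by blast
    moreover have "g ` {s \<in> S. f s \<in> A} \<subseteq> A" using ext by auto
    ultimately show ?thesis using theta_closure_mono by blast
  qed
  moreover have "g x \<in> topspace Y" using g x unfolding theta_continuous_map_def by blast
  ultimately have "g x \<in> topspace Y \<inter> \<Inter>{theta_closure Y A | A. A \<in> \<A>}" by blast
  then show False using empty by simp
qed

theorem corollary4p3:
  fixes X :: "'a topology" and Y :: "'b topology" and S :: "'a set" and f :: "'a \<Rightarrow> 'b"
  assumes "urysohn_space Y"
    and "S \<subseteq> topspace X" and "X closure_of S = topspace X"
    and "theta_continuous_map (subtopology X S) Y f"
  shows "(\<exists>g. theta_continuous_map X Y g \<and> (\<forall>x\<in>S. g x = f x)) \<longleftrightarrow>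
         ((\<forall>\<A>. (\<forall>A\<in>\<A>. A \<subseteq> topspace Y) \<longrightarrow>
               topspace Y \<inter> \<Inter>{theta_closure Y A | A. A \<in> \<A>} = {} \<longrightarrow>
               topspace X \<inter> \<Inter>{X closure_of {s \<in> S. f s \<in> A} | A. A \<in> \<A>} = {})
          \<and> (\<forall>W. openin Y W \<longrightarrow>
               (\<exists>V. openin X V \<and> X_theta X Y S f W \<subseteq> V \<and>
                    V \<subseteq> X_theta X Y S f (Y closure_of W))))"
  (is "?ext \<longleftrightarrow> ?plus \<and> ?plusplus")
proof
  assume ?ext
  then obtain g where g: "theta_continuous_map X Y g" and ext: "\<forall>x\<in>S. g x = f x" by blast
  have cluster: "\<forall>x\<in>topspace X. theta_cluster_set X Y S f x = {g x}"
    using theta_cluster_set_extension[OF assms(1,3) g ext] by blast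
  have ?plus
    by (intro allI impI theta_continuous_extension_imp_closure_condition[OF g ext])
  moreover have ?plusplus
    using g by (rule open_between_X_theta_iff_theta_continuous_map[OF cluster, THEN iffD2])
  ultimately show "?plus \<and> ?plusplus" ..
next
  assume conds: "?plus \<and> ?plusplus"
  have fY: "f ` S \<subseteq> topspace Y"
    using assms(2,4) unfolding theta_continuous_map_def by (simp add: Int_absorb1)
  define g where "g x = the_elem (theta_cluster_set X Y S f x)" for x
  have cluster: "\<forall>x\<in>topspace X. theta_cluster_set X Y S f x = {g x}"
  proof
    fix x assume "x \<in> topspace X"
    then obtain z where "theta_cluster_set X Y S f x = {z}"
      using theta_cluster_set_singleton[OF assms(1,3) fY conjunct1[OF conds]] by blast
    then show "theta_cluster_set X Y S f x = {g x}" unfolding g_def by simp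
  qed
  have "\<forall>s\<in>S. g s = f s"
    using assms(2) fY cluster by (rule theta_cluster_set_singleton_imp_eq_on)
  moreover have "theta_continuous_map X Y g"
    using conjunct2[OF conds]
    by (rule open_between_X_theta_iff_theta_continuous_map[OF cluster, THEN iffD1])
  ultimately show ?ext by blast
qed

end
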